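(* Let $X$ be a Tychonoff space and $\beta X$ its Čech–Stone compactification. (a) If $|\beta X\setminus X|=1$, then $\mathsf{EC}(X,\mathbb{R})$ holds. (b) If $\beta X\setminus X$ is at most countable and $X$ is locally compact, then $\mathsf{L}(X,\mathbb{R})$ holds.
   Context: All spaces are Hausdorff and maps continuous. For a non-Lindelöf space $X$ and a space $Y$: $\mathsf{EC}(X,Y)$ means that for every continuous $f:X\to Y$ there is a Lindelöf $Z\subset X$ with $f(X\setminus Z)$ a singleton; $\mathsf{L}(X,Y)$ means that for every continuous $f:X\to Y$ there is a Lindelöf $Z\subset X$ with $f(Z)=f(X)$. (For Lindelöf $X$ these properties are regarded as trivially true.) *)

theory Defs
  imports "HOL-Analysis.Analysis"
begin

definition EC_prop :: "'a topology \<Rightarrow> 'b topology \<Rightarrow> bool" where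
  "EC_prop X Y \<longleftrightarrow> (\<not> Lindelof_space X \<longrightarrow>
     (\<forall>f. continuous_map X Y f \<longrightarrow>
        (\<exists>Z. Z \<subseteq> topspace X \<and> Lindelof_space (subtopology X Z) \<and>
             (\<exists>c. f ` (topspace X - Z) = {c}))))"

definition L_prop :: "'a topology \<Rightarrow> 'b topology \<Rightarrow> bool" where
  "L_prop X Y \<longleftrightarrow> (\<not> Lindelof_space X \<longrightarrow>
     (\<forall>f. continuous_map X Y f \<longrightarrow>
        (\<exists>Z. Z \<subseteq> topspace X \<and> Lindelof_space (subtopology X Z) \<and>
             f ` Z = f ` topspace X)))"

definition stone_cech_compactification :: "'a topology \<Rightarrow> 'b topology \<Rightarrow> ('a \<Rightarrow> 'b) \<Rightarrow> bool" where
  "stone_cech_compactification X K e \<longleftrightarrow>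
     compact_space K \<and> Hausdorff_space K \<and> embedding_map X K e \<and>
     K closure_of (e ` topspace X) = topspace K \<and>
     (\<forall>f. continuous_map X (top_of_set {0..1::real}) f \<longrightarrow>
        (\<exists>g. continuous_map K (top_of_set {0..1::real}) g \<and>
             (\<forall>x\<in>topspace X. g (e x) = f x)))"

end

theory Submission imports Defs begin

text \<open>Compress a continuous \<open>f : X \<rightarrow> \<real>\<close> into \<open>[0,1]\<close> by \<open>arctan\<close> and extend it over
  \<open>\<beta>X\<close>: this gives a continuous \<open>g : \<beta>X \<rightarrow> \<real>\<close> through which \<open>f\<close> factors.
  Since \<open>\<beta>X\<close> is compact, \<open>g\<close> is a proper map, so the preimage under \<open>g\<close> of any set of
  reals is Lindelof; if that set avoids \<open>g(\<beta>X \ X)\<close>, the preimage lies inside \<open>X\<close>.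
  If \<open>\<beta>X \ X = {p}\<close>, the points of \<open>X\<close> outside the Lindelof set
  \<open>{x. g x \<noteq> g p}\<close> are all mapped by \<open>f\<close> to the same value.
  If \<open>\<beta>X \ X\<close> is countable, so is \<open>C = g(\<beta>X \ X)\<close>, and \<open>{x. g x \<notin> C}\<close> together with
  one point of \<open>X\<close> over each value in \<open>C\<close> is a Lindelof set with the same \<open>f\<close>-image
  as \<open>X\<close>.\<close>

lemma Lindelof_space_euclidean_subtopology:
  "Lindelof_space (subtopology (euclidean :: 'a::second_countable_topology topology) S)"
  unfolding Lindelof_space_subtopology
proof (intro allI impI)
  fix \<U> :: "'a set set"
  assume "(\<forall>U\<in>\<U>. openin euclidean U) \<and> topspace euclidean \<inter> S \<subseteq> \<Union>\<U>"
  then have "\<And>U. U \<in> \<U> \<Longrightarrow> open U" and "S \<subseteq> \<Union>\<U>" by auto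
  moreover obtain \<V> where "\<V> \<subseteq> \<U>" "countable \<V>" "\<Union>\<V> = \<Union>\<U>"
    using Lindelof[of \<U>] \<open>\<And>U. U \<in> \<U> \<Longrightarrow> open U\<close> by blast
  ultimately show "\<exists>\<V>. countable \<V> \<and> \<V> \<subseteq> \<U> \<and> topspace euclidean \<inter> S \<subseteq> \<Union>\<V>"
    by (intro exI[of _ \<V>]) simp
qed

lemma homeomorphic_space_Lindelof_space_eq:
  "X homeomorphic_space Y \<Longrightarrow> Lindelof_space X \<longleftrightarrow> Lindelof_space Y"
  using Lindelof_space_perfect_map_image_eq homeomorphic_imp_perfect_map homeomorphic_space
  by blast

lemma embedding_map_subtopology:
  "embedding_map X Y f \<Longrightarrow> embedding_map (subtopology X S) Y f"
  by (metis comp_id embedding_map_compose embedding_map_in_subtopology retract_of_space_section_map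
      retract_of_space_topspace section_imp_embedding_map subtopology_topspace)

lemma embedding_map_Lindelof_space_image_eq:
  assumes "embedding_map X Y f" and "S \<subseteq> topspace X"
  shows "Lindelof_space (subtopology X S) \<longleftrightarrow> Lindelof_space (subtopology Y (f ` S))"
proof -
  have "subtopology X S homeomorphic_space subtopology Y (f ` topspace (subtopology X S))"
    using assms(1) by (intro embedding_map_imp_homeomorphic_space embedding_map_subtopology)
  then show ?thesis
    using assms(2) by (simp add: homeomorphic_space_Lindelof_space_eq Int_absorb1)
qed

lemma Lindelof_space_compact_preimage:
  assumes "compact_space K" and "kc_space Y" and "continuous_map K Y g"
    and "Lindelof_space (subtopology Y A)"
  shows "Lindelof_space (subtopology K {y \<in> topspace K. g y \<in> A})"
proof (rule Lindelof_space_proper_map_preimage)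
  show "proper_map (subtopology K {y \<in> topspace K. g y \<in> A}) (subtopology Y A) g"
    using assms(1-3) by (intro proper_map_restriction continuous_imp_proper_map) auto
qed (fact assms(4))

lemma stone_cech_real_factorization:
  assumes "stone_cech_compactification X K e" and "continuous_map X euclideanreal f"
  obtains g \<phi> where "continuous_map K euclideanreal g"
    and "\<And>x. x \<in> topspace X \<Longrightarrow> f x = \<phi> (g (e x))"
proof -
  define h where "h x = arctan (f x) / pi + 1/2" for x
  have "continuous_on UNIV (\<lambda>y. arctan y / pi + 1/2)"
    by (intro continuous_intros) auto
  then have "continuous_map euclideanreal euclideanreal (\<lambda>y. arctan y / pi + 1/2)"
    by simp
  then have "continuous_map X euclideanreal h"
    using continuous_map_compose[OF assms(2)] unfolding h_def[abs_def] o_def by blast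
  moreover have "h x \<in> {0..1}" for x
    using arctan_bounded[of "f x"] by (auto simp: h_def field_simps)
  ultimately have "continuous_map X (top_of_set {0..1}) h"
    by (auto simp: continuous_map_in_subtopology)
  then obtain g where g: "continuous_map K (top_of_set {0..1}) g"
    and gh: "\<And>x. x \<in> topspace X \<Longrightarrow> g (e x) = h x"
    using assms(1) unfolding stone_cech_compactification_def by blast
  show thesis
  proof
    show "continuous_map K euclideanreal g"
      using g by (simp add: continuous_map_in_subtopology)
    show "f x = tan (pi * (g (e x) - 1/2))" if "x \<in> topspace X" for x
      using gh[OF that] by (simp add: h_def algebra_simps tan_arctan)
  qed
qed

lemma Lindelof_space_stone_cech_preimage:
  assumes "stone_cech_compactification X K e" and "continuous_map K euclideanreal g"
    and "g ` (topspace K - e ` topspace X) \<inter> A = {}"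
  shows "Lindelof_space (subtopology X {x \<in> topspace X. g (e x) \<in> A})"
proof -
  have emb: "embedding_map X K e" and K: "compact_space K"
    using assms(1) by (auto simp: stone_cech_compactification_def)
  then have "e ` topspace X \<subseteq> topspace K"
    unfolding embedding_map_def by (metis homeomorphic_imp_surjective_map inf_le1 topspace_subtopology)
  then have "e ` {x \<in> topspace X. g (e x) \<in> A} = {y \<in> topspace K. g y \<in> A}"
    using assms(3) by blast
  moreover have "Lindelof_space (subtopology K {y \<in> topspace K. g y \<in> A})"
    using Lindelof_space_compact_preimage[OF K _ assms(2) Lindelof_space_euclidean_subtopology]
    by (simp add: Hausdorff_imp_kc_space)
  ultimately show ?thesis
    by (subst embedding_map_Lindelof_space_image_eq[OF emb]) auto
qed

lemma EC_prop_real_if_singleton_remainder: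
  assumes K: "stone_cech_compactification X K e" and p: "topspace K - e ` topspace X = {p}"
  shows "EC_prop X euclideanreal"
  unfolding EC_prop_def
proof (intro impI allI)
  fix f assume "\<not> Lindelof_space X" and "continuous_map X euclideanreal f"
  then obtain g \<phi> where g: "continuous_map K euclideanreal g"
    and f: "\<And>x. x \<in> topspace X \<Longrightarrow> f x = \<phi> (g (e x))"
    using stone_cech_real_factorization[OF K] by blast
  define Z where "Z = {x \<in> topspace X. g (e x) \<in> - {g p}}"
  have Z: "Z \<subseteq> topspace X"
    by (auto simp: Z_def)
  have LZ: "Lindelof_space (subtopology X Z)"
    unfolding Z_def using p by (intro Lindelof_space_stone_cech_preimage[OF K g]) auto
  then have "Z \<noteq> topspace X"
    using \<open>\<not> Lindelof_space X\<close> by auto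
  then have "topspace X - Z \<noteq> {}"
    using Z by blast
  have "f x = \<phi> (g p)" if "x \<in> topspace X - Z" for x
    using that f by (auto simp: Z_def)
  then have "f ` (topspace X - Z) = (\<lambda>_. \<phi> (g p)) ` (topspace X - Z)"
    by (intro image_cong) auto
  also have "\<dots> = {\<phi> (g p)}"
    using \<open>topspace X - Z \<noteq> {}\<close> by (metis image_constant_conv)
  finally have "f ` (topspace X - Z) = {\<phi> (g p)}" .
  then show "\<exists>Z. Z \<subseteq> topspace X \<and> Lindelof_space (subtopology X Z) \<and> (\<exists>c. f ` (topspace X - Z) = {c})"
    using LZ Z by blast
qed

lemma L_prop_real_if_countable_remainder:
  assumes K: "stone_cech_compactification X K e"
    and cnt: "countable (topspace K - e ` topspace X)"
  shows "L_prop X euclideanreal"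
  unfolding L_prop_def
proof (intro impI allI)
  fix f assume "continuous_map X euclideanreal f"
  then obtain g \<phi> where g: "continuous_map K euclideanreal g"
    and f: "\<And>x. x \<in> topspace X \<Longrightarrow> f x = \<phi> (g (e x))"
    using stone_cech_real_factorization[OF K] by blast
  define C where "C = g ` (topspace K - e ` topspace X)"
  define Z1 where "Z1 = {x \<in> topspace X. g (e x) \<in> - C}"
  have L1: "Lindelof_space (subtopology X Z1)"
    unfolding Z1_def C_def by (intro Lindelof_space_stone_cech_preimage[OF K g]) auto
  have "countable (C \<inter> (\<lambda>x. g (e x)) ` topspace X)"
    using cnt by (simp add: C_def)
  then have "\<exists>Z2. countable Z2 \<and> Z2 \<subseteq> topspace X \<and> C \<inter> (\<lambda>x. g (e x)) ` topspace X = (\<lambda>x. g (e x)) ` Z2"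
    by (simp flip: countable_subset_image)
  then obtain Z2 where "countable Z2" and Z2: "Z2 \<subseteq> topspace X"
    and Z2_image: "C \<inter> (\<lambda>x. g (e x)) ` topspace X = (\<lambda>x. g (e x)) ` Z2"
    by blast
  then have L2: "Lindelof_space (subtopology X Z2)"
    by (intro countable_imp_Lindelof_space) auto
  have "Lindelof_space (subtopology X (Z1 \<union> Z2))"
    using Lindelof_space_Union[of "{Z1, Z2}" X] L1 L2 by auto
  moreover have "f ` topspace X \<subseteq> f ` (Z1 \<union> Z2)"
  proof
    fix v assume "v \<in> f ` topspace X"
    then obtain x where x: "x \<in> topspace X" and v: "v = f x" by blast
    show "v \<in> f ` (Z1 \<union> Z2)"
    proof (cases "g (e x) \<in> C")
      case True
      with x have "g (e x) \<in> (\<lambda>x. g (e x)) ` Z2"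
        unfolding Z2_image[symmetric] by blast
      then obtain z where "z \<in> Z2" and "g (e z) = g (e x)"
        by (metis imageE)
      moreover have "f z = f x"
        using f x Z2 \<open>z \<in> Z2\<close> \<open>g (e z) = g (e x)\<close> by auto
      ultimately show ?thesis
        using v by (metis UnI2 image_eqI)
    next
      case False
      then show ?thesis
        using x v by (auto simp: Z1_def)
    qed
  qed
  moreover have "Z1 \<union> Z2 \<subseteq> topspace X"
    using Z2 by (auto simp: Z1_def)
  ultimately show "\<exists>Z. Z \<subseteq> topspace X \<and> Lindelof_space (subtopology X Z) \<and> f ` Z = f ` topspace X"
    by blast
qed

theorem theorem2p6:
  fixes X :: "'a topology" and K :: "'b topology" and e :: "'a \<Rightarrow> 'b"
  assumes "completely_regular_space X" and "Hausdorff_space X"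
    and "stone_cech_compactification X K e"
  shows "((\<exists>p. topspace K - e ` topspace X = {p}) \<longrightarrow> EC_prop X euclideanreal)
    \<and> (countable (topspace K - e ` topspace X) \<and> locally_compact_space X
           \<longrightarrow> L_prop X euclideanreal)"
proof (intro conjI impI)
  assume "\<exists>p. topspace K - e ` topspace X = {p}"
  then obtain p where "topspace K - e ` topspace X = {p}" ..
  with assms(3) show "EC_prop X euclideanreal"
    by (rule EC_prop_real_if_singleton_remainder)
next
  assume "countable (topspace K - e ` topspace X) \<and> locally_compact_space X"
  then have "countable (topspace K - e ` topspace X)" ..
  with assms(3) show "L_prop X euclideanreal"
    by (rule L_prop_real_if_countable_remainder)
qed

end
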